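(* Let $K_n$ be the complete graph on $n$ vertices. Then $$\liminf_{p\to\infty}\|M_{K_n}\|_p^p\geq \sup_{\alpha>1,\ k\in\{1,\dots,n\}}\frac{k\alpha^{n/k}+\alpha(n-k)}{k\alpha^{n/k}+n-k}.$$
   Context: For a finite connected graph $G=(V,E)$ with graph distance $d_G$ and $f:V\to\mathbb{R}$, $M_Gf(v)=\sup_{r\geq 0}\frac{1}{|B(v,r)|}\sum_{u\in B(v,r)}|f(u)|$, where $B(v,r)=\{u\in V: d_G(u,v)\le r\}$. For $g:V\to\mathbb{R}$, $\|g\|_p=(\sum_{v\in V}|g(v)|^p)^{1/p}$ and $\|M_G\|_p=\sup_{f\neq 0}\|M_Gf\|_p/\|f\|_p$. *)

theory Defs
  imports "HOL-Analysis.Analysis" "HOL-Library.Extended_Real"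
begin

definition is_walk :: "'a set \<Rightarrow> ('a \<Rightarrow> 'a \<Rightarrow> bool) \<Rightarrow> 'a list \<Rightarrow> bool" where
  "is_walk V E xs \<longleftrightarrow> xs \<noteq> [] \<and> set xs \<subseteq> V \<and>
     (\<forall>i. Suc i < length xs \<longrightarrow> E (xs ! i) (xs ! Suc i))"

definition gdist :: "'a set \<Rightarrow> ('a \<Rightarrow> 'a \<Rightarrow> bool) \<Rightarrow> 'a \<Rightarrow> 'a \<Rightarrow> nat" where
  "gdist V E u v = (LEAST k. \<exists>xs. is_walk V E xs \<and> hd xs = u \<and> last xs = v \<and> length xs = Suc k)"

definition gball :: "'a set \<Rightarrow> ('a \<Rightarrow> 'a \<Rightarrow> bool) \<Rightarrow> 'a \<Rightarrow> real \<Rightarrow> 'a set" where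
  "gball V E v r = {u \<in> V. real (gdist V E u v) \<le> r}"

definition maxfun :: "'a set \<Rightarrow> ('a \<Rightarrow> 'a \<Rightarrow> bool) \<Rightarrow> ('a \<Rightarrow> real) \<Rightarrow> 'a \<Rightarrow> real" where
  "maxfun V E f v = (SUP r\<in>{0..}. (\<Sum>u\<in>gball V E v r. \<bar>f u\<bar>) / real (card (gball V E v r)))"

definition pnorm :: "'a set \<Rightarrow> real \<Rightarrow> ('a \<Rightarrow> real) \<Rightarrow> real" where
  "pnorm V p g = (\<Sum>v\<in>V. \<bar>g v\<bar> powr p) powr (1 / p)"

definition maxop_norm :: "'a set \<Rightarrow> ('a \<Rightarrow> 'a \<Rightarrow> bool) \<Rightarrow> real \<Rightarrow> real" where
  "maxop_norm V E p = (SUP f\<in>{f. \<exists>v\<in>V. f v \<noteq> 0}. pnorm V p (maxfun V E f) / pnorm V p f)"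

definition Kn_V :: "nat \<Rightarrow> nat set" where "Kn_V n = {0..<n}"
definition Kn_E :: "nat \<Rightarrow> nat \<Rightarrow> bool" where "Kn_E u v \<longleftrightarrow> u \<noteq> v"

end

theory Submission
  imports Defs
begin

text \<open>Fix \<open>\<alpha> > 1\<close>, \<open>1 \<le> k \<le> n\<close> and \<open>p > 0\<close>, and test the maximal operator of \<open>K\<^sub>n\<close> on the
  function \<open>f\<close> that equals \<open>x = \<alpha>\<^bsup>n/(kp)\<^esup>\<close> on \<open>k\<close> vertices and \<open>1\<close> on the others.
  Radius \<open>0\<close> gives \<open>M f \<ge> \<bar>f\<bar>\<close>, and radius \<open>1\<close> gives \<open>M f \<ge>\<close> the mean of \<open>f\<close>, which by the
  weighted AM-GM inequality is at least \<open>x\<^bsup>k/n\<^esup> = \<alpha>\<^bsup>1/p\<^esup>\<close>. Hence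
  \<open>\<parallel>M f\<parallel>\<^sub>p\<^sup>p \<ge> k \<alpha>\<^bsup>n/k\<^esup> + \<alpha> (n - k)\<close> while \<open>\<parallel>f\<parallel>\<^sub>p\<^sup>p = k \<alpha>\<^bsup>n/k\<^esup> + n - k\<close>. The bound thus holds
  for every \<open>p > 0\<close>, not only in the limit.\<close>

lemma ball_average_le_sum_abs:
  assumes "finite V"
  shows "(\<Sum>u\<in>gball V E v r. \<bar>f u\<bar>) / real (card (gball V E v r)) \<le> (\<Sum>u\<in>V. \<bar>f u\<bar>)"
proof -
  have "(\<Sum>u\<in>gball V E v r. \<bar>f u\<bar>) \<le> (\<Sum>u\<in>V. \<bar>f u\<bar>)"
    using assms by (intro sum_mono2) (auto simp: gball_def)
  moreover have "a / real c \<le> a" if "0 \<le> a" for a :: real and c :: nat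
    using that by (cases "c = 0") (simp_all add: divide_le_eq mult_le_cancel_left1)
  ultimately show ?thesis
    by (meson order_trans sum_nonneg abs_ge_zero)
qed

lemma maxfun_ge_ball_average:
  assumes "finite V" "r \<ge> 0"
  shows "(\<Sum>u\<in>gball V E v r. \<bar>f u\<bar>) / real (card (gball V E v r)) \<le> maxfun V E f v"
  unfolding maxfun_def using assms ball_average_le_sum_abs[OF assms(1)]
  by (intro cSUP_upper bdd_aboveI2) auto

lemma maxfun_le_sum_abs:
  assumes "finite V"
  shows "maxfun V E f v \<le> (\<Sum>u\<in>V. \<bar>f u\<bar>)"
  unfolding maxfun_def using ball_average_le_sum_abs[OF assms] by (intro cSUP_least) auto

lemma maxfun_nonneg:
  assumes "finite V"
  shows "0 \<le> maxfun V E f v"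
  using maxfun_ge_ball_average[of V 0 f E v] assms
  by (simp add: sum_nonneg order_trans[rotated])

lemma pnorm_pos:
  assumes "finite V" "p > 0" "v \<in> V" "f v \<noteq> 0"
  shows "pnorm V p f > 0"
proof -
  have "0 < \<bar>f v\<bar> powr p" using assms by simp
  also have "\<dots> \<le> (\<Sum>u\<in>V. \<bar>f u\<bar> powr p)"
    using assms by (intro member_le_sum) auto
  finally show ?thesis unfolding pnorm_def by simp
qed

lemma abs_le_pnorm:
  assumes "finite V" "p > 0" "v \<in> V"
  shows "\<bar>f v\<bar> \<le> pnorm V p f"
proof -
  have "\<bar>f v\<bar> = (\<bar>f v\<bar> powr p) powr (1/p)" using assms by (simp add: powr_powr)
  also have "\<dots> \<le> (\<Sum>u\<in>V. \<bar>f u\<bar> powr p) powr (1/p)"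
    using assms by (intro powr_mono2 member_le_sum) auto
  finally show ?thesis unfolding pnorm_def .
qed

lemma pnorm_maxfun_le:
  assumes "finite V" "p > 0"
  shows "pnorm V p (maxfun V E f) \<le> real (card V) powr (1/p) * real (card V) * pnorm V p f"
proof -
  define S where "S = (\<Sum>u\<in>V. \<bar>f u\<bar>)"
  have "0 \<le> S" unfolding S_def by (simp add: sum_nonneg)
  have "pnorm V p (maxfun V E f) \<le> (\<Sum>u\<in>V. S powr p) powr (1/p)"
    unfolding pnorm_def S_def using assms maxfun_nonneg[OF assms(1)] maxfun_le_sum_abs[OF assms(1)]
    by (intro powr_mono2 sum_mono sum_nonneg) auto
  also have "\<dots> = real (card V) powr (1/p) * S"
    using \<open>0 \<le> S\<close> assms by (simp add: powr_mult powr_powr)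
  also have "S \<le> (\<Sum>u\<in>V. pnorm V p f)"
    unfolding S_def using abs_le_pnorm[OF assms] by (intro sum_mono)
  finally show ?thesis by (simp add: mult.assoc mult_left_mono)
qed

lemma maxop_norm_powr_ge:
  assumes "finite V" "p > 0" "v \<in> V" "f v \<noteq> 0"
  shows "(\<Sum>u\<in>V. \<bar>maxfun V E f u\<bar> powr p) / (\<Sum>u\<in>V. \<bar>f u\<bar> powr p) \<le> maxop_norm V E p powr p"
proof -
  have "pnorm V p (maxfun V E f) / pnorm V p f \<le> maxop_norm V E p"
    unfolding maxop_norm_def
  proof (rule cSUP_upper)
    show "f \<in> {f. \<exists>v\<in>V. f v \<noteq> 0}" using assms by auto
    have "pnorm V p (maxfun V E g) / pnorm V p g \<le> real (card V) powr (1/p) * real (card V)"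
      if "w \<in> V" "g w \<noteq> 0" for g w
      using pnorm_maxfun_le[OF assms(1,2)] pnorm_pos[of V p w g] assms that
      by (simp add: pos_divide_le_eq)
    then show "bdd_above ((\<lambda>f. pnorm V p (maxfun V E f) / pnorm V p f) ` {f. \<exists>v\<in>V. f v \<noteq> 0})"
      by (intro bdd_aboveI2) auto
  qed
  then have "(pnorm V p (maxfun V E f) / pnorm V p f) powr p \<le> maxop_norm V E p powr p"
    using assms(2) by (intro powr_mono2) (auto simp: pnorm_def)
  then show ?thesis
    using assms(2) by (simp add: pnorm_def powr_divide powr_powr sum_nonneg)
qed

lemma gdist_Kn_E:
  assumes "u \<in> V" "v \<in> V"
  shows "gdist V Kn_E u v = (if u = v then 0 else 1)"
proof (cases "u = v")
  case True
  have "is_walk V Kn_E [v]" using assms by (simp add: is_walk_def)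
  then have "gdist V Kn_E u v = 0"
    unfolding gdist_def using True by (intro Least_eq_0) (auto intro!: exI[of _ "[v]"])
  then show ?thesis using True by simp
next
  case False
  have "is_walk V Kn_E [u, v]"
    using assms False by (auto simp: is_walk_def Kn_E_def less_Suc_eq)
  moreover have "1 \<le> k"
    if "is_walk V Kn_E xs" "hd xs = u" "last xs = v" "length xs = Suc k" for xs k
    using that False by (cases xs) (auto simp: Suc_le_eq)
  ultimately have "gdist V Kn_E u v = 1"
    unfolding gdist_def by (intro Least_equality) (auto intro!: exI[of _ "[u, v]"])
  then show ?thesis using False by simp
qed

lemma abs_le_maxfun_Kn_E:
  assumes "finite V" "v \<in> V"
  shows "\<bar>f v\<bar> \<le> maxfun V Kn_E f v"
proof -
  have "gball V Kn_E v 0 = {v}"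
    using assms by (auto simp: gball_def gdist_Kn_E split: if_splits)
  then show ?thesis using maxfun_ge_ball_average[of V 0 f Kn_E v] assms by simp
qed

lemma mean_le_maxfun_Kn_E:
  assumes "finite V" "v \<in> V"
  shows "(\<Sum>u\<in>V. \<bar>f u\<bar>) / real (card V) \<le> maxfun V Kn_E f v"
proof -
  have "gball V Kn_E v 1 = V"
    using assms by (auto simp: gball_def gdist_Kn_E)
  then show ?thesis using maxfun_ge_ball_average[of V 1 f Kn_E v] assms by simp
qed

lemma sum_atLeastLessThan_if_less:
  assumes "k \<le> n"
  shows "(\<Sum>v\<in>{0..<n}. if v < k then a else b) = real k * a + real (n - k) * (b :: real)"
proof -
  have "(\<Sum>v\<in>{0..<n}. if v < k then a else b)
      = (\<Sum>v\<in>{0..<k}. if v < k then a else b) + (\<Sum>v\<in>{k..<n}. if v < k then a else b)"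
    using assms by (intro sum.atLeastLessThan_concat[symmetric]) auto
  also have "\<dots> = (\<Sum>v\<in>{0..<k}. a) + (\<Sum>v\<in>{k..<n}. b)"
    by (intro arg_cong2[where f = "(+)"] sum.cong) auto
  also have "\<dots> = real k * a + real (n - k) * b"
    by simp
  finally show ?thesis .
qed

lemma powr_le_weighted_mean:
  fixes x :: real
  assumes "0 < x" "k \<le> n" "0 < n"
  shows "x powr (real k / real n) \<le> (real k * x + real (n - k)) / real n"
  using Youngs_inequality_0[of "real k / real n" "1 - real k / real n" x 1] assms
  by (simp add: field_simps of_nat_diff)

lemma maxop_norm_Kn_powr_ge:
  fixes \<alpha> p :: real and k n :: nat
  assumes "\<alpha> > 1" "1 \<le> k" "k \<le> n" "p > 0"
  shows "(real k * \<alpha> powr (real n / real k) + \<alpha> * real (n - k))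
           / (real k * \<alpha> powr (real n / real k) + real (n - k))
         \<le> maxop_norm (Kn_V n) Kn_E p powr p"
proof -
  define x where "x = \<alpha> powr (real n / (real k * p))"
  define X where "X = \<alpha> powr (real n / real k)"
  define f where "f = (\<lambda>v::nat. if v < k then x else 1)"
  have "x > 1" unfolding x_def using assms by (intro gr_one_powr) auto
  have x_powr_p: "x powr p = X" unfolding x_def X_def using assms by (simp add: powr_powr)
  have sum_f: "(\<Sum>v\<in>{0..<n}. g (f v)) = real k * g x + real (n - k) * g 1" for g :: "real \<Rightarrow> real"
    using sum_atLeastLessThan_if_less[OF assms(3), of "g x" "g 1"] by (simp add: f_def if_distrib)
  have "\<alpha> = (x powr (real k / real n)) powr p"
    unfolding x_def using assms by (simp add: powr_powr)
  also have "\<dots> \<le> ((\<Sum>v\<in>{0..<n}. \<bar>f v\<bar>) / real n) powr p"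
    using powr_le_weighted_mean[of x k n] sum_f[of abs] \<open>x > 1\<close> assms by (intro powr_mono2) auto
  finally have mean_ge: "\<alpha> \<le> ((\<Sum>v\<in>{0..<n}. \<bar>f v\<bar>) / real n) powr p" .
  have maxfun_ge: "(if v < k then X else \<alpha>) \<le> \<bar>maxfun {0..<n} Kn_E f v\<bar> powr p" if "v < n" for v
  proof (cases "v < k")
    case True
    then have "X = \<bar>f v\<bar> powr p" using \<open>x > 1\<close> by (simp add: f_def x_powr_p)
    also have "\<dots> \<le> \<bar>maxfun {0..<n} Kn_E f v\<bar> powr p"
      using abs_le_maxfun_Kn_E[of "{0..<n}" v f] that assms(4) by (intro powr_mono2) auto
    finally show ?thesis using True by simp
  next
    case False
    note mean_ge
    also have "((\<Sum>v\<in>{0..<n}. \<bar>f v\<bar>) / real n) powr p \<le> \<bar>maxfun {0..<n} Kn_E f v\<bar> powr p"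
      using mean_le_maxfun_Kn_E[of "{0..<n}" v f] that assms(4) by (intro powr_mono2) (auto simp: sum_nonneg)
    finally show ?thesis using False by simp
  qed
  have "real k * X + \<alpha> * real (n - k) = (\<Sum>v\<in>{0..<n}. if v < k then X else \<alpha>)"
    using sum_atLeastLessThan_if_less[OF assms(3)] by (simp add: mult.commute)
  also have "\<dots> \<le> (\<Sum>v\<in>{0..<n}. \<bar>maxfun {0..<n} Kn_E f v\<bar> powr p)"
    using maxfun_ge by (intro sum_mono) auto
  finally have "real k * X + \<alpha> * real (n - k) \<le> (\<Sum>v\<in>{0..<n}. \<bar>maxfun {0..<n} Kn_E f v\<bar> powr p)" .
  moreover have "(\<Sum>v\<in>{0..<n}. \<bar>f v\<bar> powr p) = real k * X + real (n - k)"
    using sum_f[of "\<lambda>y. \<bar>y\<bar> powr p"] \<open>x > 1\<close> by (simp add: x_powr_p)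
  moreover have "0 < real k * X + real (n - k)"
    using assms by (simp add: X_def add_pos_nonneg)
  moreover have "f 0 \<noteq> 0" using assms \<open>x > 1\<close> by (simp add: f_def)
  ultimately show ?thesis
    using maxop_norm_powr_ge[of "{0..<n}" p 0 f Kn_E] assms
    unfolding X_def Kn_V_def by (auto intro: order_trans[OF divide_right_mono])
qed

theorem lemma3p2:
  fixes n :: nat
  shows "Liminf at_top (\<lambda>p::real. ereal (maxop_norm (Kn_V n) Kn_E p powr p))
     \<ge> (SUP ak\<in>{\<alpha>::real. \<alpha> > 1} \<times> {1..n}.
          ereal ((real (snd ak) * fst ak powr (real n / real (snd ak)) + fst ak * real (n - snd ak))
               / (real (snd ak) * fst ak powr (real n / real (snd ak)) + real (n - snd ak))))"
  by (intro SUP_least Liminf_bounded eventually_mono[OF eventually_gt_at_top[of 0]])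
    (auto simp del: of_nat_diff intro!: maxop_norm_Kn_powr_ge)

end
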